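(* Let $\tau>0$ and $f\in C(\mathbb R_+\times\mathbb R,\mathbb R)$ be regular and asymptotically $\tau$-periodic in time, $f=P+R$. Assume every $\tau$-periodic solution of $x'=P(t,x)$ is positively asymptotically stable or negatively asymptotically stable, and that the solution $\varphi(t,u_0,f)$ of $x'=f(t,x)$, $x(0)=u_0$, is bounded on $\mathbb R_+$. Then $\varphi(t,u_0,f)$ is asymptotically $\tau$-periodic.
   Context: Regular: for every $g\in H(f)=\overline{\{f(\cdot+h,\cdot):h\ge0\}}$ (compact-open topology) and $v\in\mathbb R$, $y'=g(t,y)$ has a unique solution $\varphi(t,v,g)$, $\varphi(0,v,g)=v$, defined on $\mathbb R_+$. Asymptotically $\tau$-periodic in time: $f=P+R$, $P,R$ continuous, $P(t+\tau,x)=P(t,x)$, $R(t,x)\to0$ as $t\to+\infty$ uniformly on compact $x$-sets (extend $P$ $\tau$-periodically to $t\in\mathbb R$). A $\tau$-periodic solution $\varphi(t,u_0,P)$ of $x'=P(t,x)$ is positively asymptotically stable if (a) for all $\varepsilon>0$ there is $\delta>0$ with $|u-u_0|<\delta\Rightarrow|\varphi(t,u,P)-\varphi(t,u_0,P)|<\varepsilon$ for all $t\ge0$, and (b) there is $\gamma>0$ with $|\varphi(t,u,P)-\varphi(t,u_0,P)|\to0$ as $t\to+\infty$ whenever $|u-u_0|<\gamma$; negatively asymptotically stable means the same with $t\le0$ and $t\to-\infty$ (for the equation considered in backward time). Asymptotically $\tau$-periodic solution: differs from a continuous $\tau$-periodic function by a function tending to $0$ as $t\to+\infty$. *)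

theory Defs
  imports "HOL-Analysis.Analysis"
begin

text \<open>Functions on R_+ x R are represented as curried maps real => real => real;
  only their values for t >= 0 matter.\<close>

definition fwd_sol :: "(real \<Rightarrow> real \<Rightarrow> real) \<Rightarrow> real \<Rightarrow> (real \<Rightarrow> real) \<Rightarrow> bool" where
  "fwd_sol g v y \<longleftrightarrow> y 0 = v \<and>
     (\<forall>t\<ge>0. (y has_real_derivative g t (y t)) (at t within {0..}))"

definition bwd_sol :: "(real \<Rightarrow> real \<Rightarrow> real) \<Rightarrow> real \<Rightarrow> (real \<Rightarrow> real) \<Rightarrow> bool" where
  "bwd_sol g v y \<longleftrightarrow> y 0 = v \<and>
     (\<forall>t\<le>0. (y has_real_derivative g t (y t)) (at t within {..0}))"

text \<open>phi(t,v,g): the (unique, under regularity) solution on R_+.\<close>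
definition phi :: "(real \<Rightarrow> real \<Rightarrow> real) \<Rightarrow> real \<Rightarrow> real \<Rightarrow> real" where
  "phi g v = (SOME y. fwd_sol g v y)"

text \<open>Hull H(f): closure of the translates f(.+h,.), h >= 0, in the compact-open
  topology of C(R_+ x R, R), i.e. the topology of uniform convergence on compacta.\<close>
definition hull_fun :: "(real \<Rightarrow> real \<Rightarrow> real) \<Rightarrow> (real \<Rightarrow> real \<Rightarrow> real) set" where
  "hull_fun f = {g. continuous_on ({0..} \<times> UNIV) (\<lambda>(t,x). g t x) \<and>
     (\<forall>K. K \<subseteq> {0..} \<times> UNIV \<longrightarrow> compact K \<longrightarrow>
        (\<forall>e>0. \<exists>h\<ge>0. \<forall>(t,x)\<in>K. \<bar>f (t + h) x - g t x\<bar> < e))}"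

definition regular :: "(real \<Rightarrow> real \<Rightarrow> real) \<Rightarrow> bool" where
  "regular f \<longleftrightarrow> (\<forall>g\<in>hull_fun f. \<forall>v. \<exists>y. fwd_sol g v y \<and>
      (\<forall>z. fwd_sol g v z \<longrightarrow> (\<forall>t\<ge>0. z t = y t)))"

text \<open>f = P + R asymptotically tau-periodic decomposition (P extended tau-periodically to R).\<close>
definition asymp_periodic_decomp ::
  "real \<Rightarrow> (real \<Rightarrow> real \<Rightarrow> real) \<Rightarrow> (real \<Rightarrow> real \<Rightarrow> real) \<Rightarrow> (real \<Rightarrow> real \<Rightarrow> real) \<Rightarrow> bool" where
  "asymp_periodic_decomp \<tau> f P R \<longleftrightarrow>
     continuous_on UNIV (\<lambda>(t,x). P t x) \<and>
     continuous_on ({0..} \<times> UNIV) (\<lambda>(t,x). R t x) \<and>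
     (\<forall>t x. P (t + \<tau>) x = P t x) \<and>
     (\<forall>t\<ge>0. \<forall>x. f t x = P t x + R t x) \<and>
     (\<forall>K. compact K \<longrightarrow> (\<forall>e>0. \<exists>T. \<forall>t\<ge>T. \<forall>x\<in>K. \<bar>R t x\<bar> < e))"

text \<open>A tau-periodic solution of x' = P(t,x) (taken on all of R, i.e. the periodic
  extension of phi(.,p 0,P)).\<close>
definition periodic_sol :: "real \<Rightarrow> (real \<Rightarrow> real \<Rightarrow> real) \<Rightarrow> (real \<Rightarrow> real) \<Rightarrow> bool" where
  "periodic_sol \<tau> P p \<longleftrightarrow> (\<forall>t. p (t + \<tau>) = p t) \<and>
     (\<forall>t. (p has_real_derivative P t (p t)) (at t))"

definition pos_asymp_stable :: "(real \<Rightarrow> real \<Rightarrow> real) \<Rightarrow> (real \<Rightarrow> real) \<Rightarrow> bool" where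
  "pos_asymp_stable P p \<longleftrightarrow>
     (\<forall>e>0. \<exists>d>0. \<forall>u. \<bar>u - p 0\<bar> < d \<longrightarrow> (\<forall>t\<ge>0. \<bar>phi P u t - p t\<bar> < e)) \<and>
     (\<exists>c>0. \<forall>u. \<bar>u - p 0\<bar> < c \<longrightarrow> ((\<lambda>t. \<bar>phi P u t - p t\<bar>) \<longlongrightarrow> 0) at_top)"

text \<open>Backward analogue; phi(t,u,P) for t <= 0 is read as: backward solutions exist
  and every backward solution has the property.\<close>
definition neg_asymp_stable :: "(real \<Rightarrow> real \<Rightarrow> real) \<Rightarrow> (real \<Rightarrow> real) \<Rightarrow> bool" where
  "neg_asymp_stable P p \<longleftrightarrow>
     (\<forall>e>0. \<exists>d>0. \<forall>u. \<bar>u - p 0\<bar> < d \<longrightarrow>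
        (\<exists>y. bwd_sol P u y) \<and> (\<forall>y. bwd_sol P u y \<longrightarrow> (\<forall>t\<le>0. \<bar>y t - p t\<bar> < e))) \<and>
     (\<exists>c>0. \<forall>u. \<bar>u - p 0\<bar> < c \<longrightarrow>
        (\<exists>y. bwd_sol P u y) \<and> (\<forall>y. bwd_sol P u y \<longrightarrow> ((\<lambda>t. \<bar>y t - p t\<bar>) \<longlongrightarrow> 0) at_bot))"

definition asymp_periodic_fun :: "real \<Rightarrow> (real \<Rightarrow> real) \<Rightarrow> bool" where
  "asymp_periodic_fun \<tau> y \<longleftrightarrow> (\<exists>q. continuous_on UNIV q \<and> (\<forall>t. q (t + \<tau>) = q t) \<and>
     ((\<lambda>t. y t - q t) \<longlongrightarrow> 0) at_top)"

end

theory Submission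
  imports Defs "HOL-Complex_Analysis.Great_Picard" "HOL-Library.Periodic_Fun" "HOL-Library.Real_Mod"
begin

text \<open>The period map T u = \<phi>(\<tau>, u, P) of the limit equation is monotone, because solutions
  of a scalar equation with unique solutions cannot cross, and its fixed points are the initial
  values of the \<tau>-periodic solutions. Positive or negative asymptotic stability makes every fixed
  point isolated, so no interval consists of fixed points.

  Let y_n = \<phi>(n\<tau>, u0, f). By Arzela-Ascoli and f(t + n\<tau>, x) \<rightarrow> P(t, x), whenever
  y_n \<rightarrow> v along a subsequence, \<phi>(n\<tau> + s, u0, f) \<rightarrow> \<phi>(s, v, P) uniformly on [0, \<tau>] along
  that subsequence; in particular T transports subsequential limits of (y_n) one step forward.
  Together with monotonicity this forces (y_n) to stay eventually on one side of every
  non-fixed point of T, so (y_n) converges to a fixed point v, and the solution is asymptotic to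
  the \<tau>-periodic solution through v.\<close>

lemma fwd_sol_shift:
  assumes "fwd_sol g v x" "a \<ge> 0"
  shows "fwd_sol (\<lambda>t. g (t + a)) (x a) (\<lambda>s. x (s + a))"
  unfolding fwd_sol_def
proof (intro conjI allI impI)
  fix t :: real assume t: "t \<ge> 0"
  have d: "(x has_real_derivative g (t + a) (x (t + a))) (at (t + a) within {0..})"
    using assms t unfolding fwd_sol_def by auto
  have im: "(\<lambda>s. s + a) ` {0..} \<subseteq> {0..}" using assms(2) by auto
  have d2: "(x has_real_derivative g (t + a) (x (t + a))) (at ((\<lambda>s. s + a) t) within ((\<lambda>s. s + a) ` {0..}))"
    using has_field_derivative_subset[OF d im] by simp
  have "((\<lambda>s. s + a) has_real_derivative 1) (at t within {0..})"
    by (auto intro!: derivative_eq_intros)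
  from DERIV_image_chain[OF d2 this]
  show "((\<lambda>s. x (s + a)) has_real_derivative g (t + a) (x (t + a))) (at t within {0..})"
    by (simp add: o_def)
qed simp

lemma has_field_derivative_at_isolated:
  assumes "\<not> t islimpt S"
  shows "(y has_field_derivative D) (at t within S)"
proof -
  have "at t within S = bot" using assms trivial_limit_within by blast
  then show ?thesis by (simp add: has_field_derivative_iff)
qed

lemma has_field_derivative_within_Un:
  "(y has_field_derivative D) (at t within S) \<Longrightarrow> (y has_field_derivative D) (at t within T)
    \<Longrightarrow> (y has_field_derivative D) (at t within S \<union> T)"
  by (simp add: has_field_derivative_iff Lim_within_Un)

lemma fwd_sol_glue:
  assumes "L \<ge> 0"
    and y: "\<And>t. t \<in> {0..L} \<Longrightarrow> (y has_real_derivative g t (y t)) (at t within {0..L})"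
    and w: "fwd_sol (\<lambda>t. g (t + L)) (y L) w"
  shows "fwd_sol g (y 0) (\<lambda>t. if t \<le> L then y t else w (t - L))" (is "fwd_sol g _ ?z")
  unfolding fwd_sol_def
proof (intro conjI allI impI)
  show "?z 0 = y 0" using \<open>L \<ge> 0\<close> by simp
  fix t :: real assume "t \<ge> 0"
  have left: "(?z has_real_derivative g t (?z t)) (at t within {0..L})"
  proof (cases "t \<le> L")
    case True
    then have "(y has_real_derivative g t (?z t)) (at t within {0..L})"
      using y \<open>t \<ge> 0\<close> by simp
    then show ?thesis
      by (rule has_field_derivative_transform_within[OF _ zero_less_one])
        (use True \<open>t \<ge> 0\<close> in auto)
  next
    case False
    then show ?thesis
      by (intro has_field_derivative_at_isolated) (meson atLeastAtMost_iff closed_atLeastAtMost closed_limpt)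
  qed
  have w_eq: "w (s - L) = ?z s" if "s \<ge> L" for s
  proof (cases "s = L")
    case True
    then show ?thesis using w by (simp add: fwd_sol_def)
  qed (use that in simp)
  have right: "(?z has_real_derivative g t (?z t)) (at t within {L..})"
  proof (cases "L \<le> t")
    case True
    then have "(w has_real_derivative g t (w (t - L))) (at (t - L) within {0..})"
      using w unfolding fwd_sol_def by (metis diff_add_cancel diff_ge_0_iff_ge)
    then have "(w has_real_derivative g t (w (t - L))) (at (t - L) within (\<lambda>s. s - L) ` {L..})"
      by (rule has_field_derivative_subset) auto
    moreover have "((\<lambda>s. s - L) has_real_derivative 1) (at t within {L..})"
      by (auto intro!: derivative_eq_intros)
    ultimately have "((w \<circ> (\<lambda>s. s - L)) has_real_derivative g t (w (t - L))) (at t within {L..})"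
      using DERIV_image_chain by fastforce
    then have "((\<lambda>s. w (s - L)) has_real_derivative g t (?z t)) (at t within {L..})"
      using w_eq[OF True] by (simp add: o_def)
    then show ?thesis
      by (rule has_field_derivative_transform_within[OF _ zero_less_one]) (use True w_eq in auto)
  next
    case False
    then show ?thesis
      by (intro has_field_derivative_at_isolated) (meson atLeast_iff closed_atLeast closed_limpt)
  qed
  have "{0..} = {0..L} \<union> {L::real..}" using \<open>L \<ge> 0\<close> by auto
  with has_field_derivative_within_Un[OF left right]
  show "(?z has_real_derivative g t (?z t)) (at t within {0..})" by simp
qed

lemma asymp_periodic_funI:
  fixes \<tau> :: real and y q :: "real \<Rightarrow> real"
  assumes "\<tau> > 0" "continuous_on UNIV q" "\<And>t. q (t + \<tau>) = q t"
    and unif: "uniform_limit {0..\<tau>} (\<lambda>n s. y (s + real n * \<tau>)) q sequentially"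
  shows "asymp_periodic_fun \<tau> y"
  unfolding asymp_periodic_fun_def
proof (intro exI conjI allI)
  interpret periodic_fun_simple q \<tau> by unfold_locales (rule assms(3))
  show "continuous_on UNIV q" "q (t + \<tau>) = q t" for t by (fact assms(2), fact assms(3))
  show "((\<lambda>t. y t - q t) \<longlongrightarrow> 0) at_top"
  proof (rule tendstoI)
    fix e :: real assume "e > 0"
    with unif obtain N where N: "\<forall>n\<ge>N. \<forall>s\<in>{0..\<tau>}. dist (y (s + real n * \<tau>)) (q s) < e"
      by (auto simp: uniform_limit_sequentially_iff)
    have "dist (y t - q t) 0 < e" if t: "real N * \<tau> \<le> t" for t
    proof -
      define n where "n = nat \<lfloor>t / \<tau>\<rfloor>"
      have "real N \<le> t / \<tau>" using t assms(1) by (simp add: pos_le_divide_eq)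
      then have "N \<le> n" unfolding n_def by (simp add: le_nat_floor)
      have "0 \<le> real N * \<tau>" using assms(1) by simp
      with t have "0 \<le> t" by linarith
      then have t_eq: "t = t rmod \<tau> + real n * \<tau>"
        using assms(1) by (simp add: rmod_def n_def)
      have "t rmod \<tau> \<in> {0..\<tau>}" using assms(1) by (simp add: rmod_nonneg rmod_le)
      with N \<open>N \<le> n\<close> have "dist (y (t rmod \<tau> + real n * \<tau>)) (q (t rmod \<tau>)) < e" by blast
      moreover have "q t = q (t rmod \<tau>)" using plus_of_nat[of "t rmod \<tau>" n] t_eq by simp
      ultimately show ?thesis using t_eq by (simp add: dist_real_def)
    qed
    then show "\<forall>\<^sub>F t in at_top. dist (y t - q t) 0 < e" by (rule eventually_at_top_linorderI)
  qed
qed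

lemma frequently_sequentiallyE:
  assumes "\<exists>\<^sub>F n in sequentially. Q n"
  obtains r :: "nat \<Rightarrow> nat" where "strict_mono r" "\<And>k. Q (r k)"
proof -
  have "infinite {n. Q n}"
    using assms by (simp add: frequently_sequentially infinite_nat_iff_unbounded_le)
  from infinite_enumerate[OF this] obtain r :: "nat \<Rightarrow> nat" where "strict_mono r" "\<forall>k. r k \<in> {n. Q n}"
    by auto
  with that show ?thesis by simp
qed

lemma eventually_gt_or_lt_if_upcrossing_persistent:
  fixes y :: "nat \<Rightarrow> real"
  assumes "\<forall>\<^sub>F n in sequentially. c \<le> y n \<longrightarrow> c < y (Suc n)"
  shows "(\<forall>\<^sub>F n in sequentially. c < y n) \<or> (\<forall>\<^sub>F n in sequentially. y n < c)"
proof -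
  from assms obtain N where N: "\<forall>n\<ge>N. c \<le> y n \<longrightarrow> c < y (Suc n)"
    by (auto simp: eventually_sequentially)
  show ?thesis
  proof (cases "\<exists>n\<ge>N. c \<le> y n")
    case True
    then obtain n where n: "n \<ge> N" "c \<le> y n" by blast
    have above: "c < y (Suc n + k)" for k
    proof (induction k)
      case 0
      then show ?case using N n by simp
    next
      case (Suc k)
      then show ?case using N n(1) by (simp add: less_imp_le)
    qed
    have "\<forall>\<^sub>F j in sequentially. c < y j"
      by (rule eventually_sequentiallyI[of "Suc n"]) (metis above le_add_diff_inverse)
    then show ?thesis ..
  next
    case False
    then have "\<forall>\<^sub>F j in sequentially. y j < c"
      by (intro eventually_sequentiallyI[of N]) (meson not_le)
    then show ?thesis ..
  qed
qed

lemma convergent_if_eventually_gt_or_lt_dense: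
  fixes y :: "nat \<Rightarrow> real"
  assumes "bounded (range y)"
    and sides: "\<And>a b. a < b \<Longrightarrow>
      \<exists>c\<in>{a<..<b}. (\<forall>\<^sub>F n in sequentially. c < y n) \<or> (\<forall>\<^sub>F n in sequentially. y n < c)"
  shows "convergent y"
proof -
  define A where "A = {c. \<forall>\<^sub>F n in sequentially. c < y n}"
  define B where "B = {c. \<forall>\<^sub>F n in sequentially. y n < c}"
  obtain M where M: "\<And>n. \<bar>y n\<bar> \<le> M"
    using assms(1) by (auto simp: bounded_iff)
  have "- M - 1 < y n" "y n < M + 1" for n
    using M[of n] by (simp_all add: abs_le_iff)
  then have lo: "- M - 1 \<in> A" and hi: "M + 1 \<in> B"
    by (simp_all add: A_def B_def)
  then have A: "A \<noteq> {}" and B: "B \<noteq> {}" by auto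
  have below: "c < d" if "c \<in> A" "d \<in> B" for c d
  proof -
    have "\<forall>\<^sub>F n in sequentially. c < y n \<and> y n < d"
      using that by (simp add: A_def B_def eventually_conj)
    then obtain N where "\<forall>n\<ge>N. c < y n \<and> y n < d" by (auto simp: eventually_sequentially)
    then show ?thesis by fastforce
  qed
  have bdd: "bdd_above A" "bdd_below B"
    using below lo hi by (meson bdd_aboveI bdd_belowI less_imp_le)+
  define a where "a = Sup A"
  define b where "b = Inf B"
  have "a \<le> b"
    unfolding a_def b_def using below A B by (meson cInf_greatest cSup_least less_imp_le)
  moreover have "\<not> a < b"
  proof
    assume "a < b"
    then obtain c where c: "a < c" "c < b" "c \<in> A \<or> c \<in> B"
      using sides[of a b] by (auto simp: A_def B_def)
    then show False
      using cSup_upper[OF _ bdd(1)] cInf_lower[OF _ bdd(2)] by (fastforce simp: a_def b_def)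
  qed
  ultimately have "a = b" by simp
  have "y \<longlonglongrightarrow> a"
  proof (rule order_tendstoI)
    fix a' assume "a' < a"
    then obtain c where "c \<in> A" "a' < c" using less_cSup_iff[OF A bdd(1)] a_def by blast
    then show "\<forall>\<^sub>F n in sequentially. a' < y n"
      by (auto simp: A_def elim: eventually_mono)
  next
    fix a' assume "a < a'"
    then obtain d where "d \<in> B" "d < a'" using cInf_less_iff[OF B bdd(2)] b_def \<open>a = b\<close> by auto
    then show "\<forall>\<^sub>F n in sequentially. y n < a'"
      by (auto simp: B_def elim: eventually_mono)
  qed
  then show ?thesis by (auto simp: convergent_def)
qed

locale monotone_limit_map =
  fixes y :: "nat \<Rightarrow> real" and T :: "real \<Rightarrow> real"
  assumes bounded_range: "bounded (range y)"
    and mono: "mono T"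
    and tendsto_Suc: "\<And>m l. strict_mono m \<Longrightarrow> (\<lambda>k. y (m k)) \<longlonglongrightarrow> l \<Longrightarrow> (\<lambda>k. y (Suc (m k))) \<longlonglongrightarrow> T l"
begin

lemma upcrossing_persistent:
  assumes "c < T c"
  shows "\<forall>\<^sub>F n in sequentially. c \<le> y n \<longrightarrow> c < y (Suc n)"
proof (rule ccontr)
  assume "\<not> ?thesis"
  then have freq: "\<exists>\<^sub>F n in sequentially. c \<le> y n \<and> y (Suc n) \<le> c"
    by (simp add: not_eventually not_less)
  obtain r :: "nat \<Rightarrow> nat"
    where r: "strict_mono r" "\<And>k. c \<le> y (r k) \<and> y (Suc (r k)) \<le> c"
    using frequently_sequentiallyE[OF freq] by metis
  have "bounded (range (y \<circ> r))" using bounded_range by (rule bounded_subset) auto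
  from bounded_imp_convergent_subsequence[OF this] obtain l s
    where s: "strict_mono s" "((y \<circ> r) \<circ> s) \<longlonglongrightarrow> l"
    by auto
  have rs: "strict_mono (r \<circ> s)" using r(1) s(1) by (rule strict_mono_o)
  have lim: "(\<lambda>k. y ((r \<circ> s) k)) \<longlonglongrightarrow> l" using s(2) by (simp add: o_def)
  have "c \<le> l" by (rule LIMSEQ_le_const[OF lim]) (simp add: r)
  moreover have "T l \<le> c" by (rule LIMSEQ_le_const2[OF tendsto_Suc[OF rs lim]]) (simp add: r)
  moreover have "T c \<le> T l" using mono \<open>c \<le> l\<close> by (rule monoD)
  ultimately show False using assms by linarith
qed

lemma reflect: "monotone_limit_map (\<lambda>n. - y n) (\<lambda>x. - T (- x))"
proof
  show "bounded (range (\<lambda>n. - y n))"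
    using bounded_uminus[of "range y"] bounded_range by (simp add: image_image)
  show "mono (\<lambda>x. - T (- x))" using mono by (simp add: mono_def)
  fix m l assume m: "strict_mono m" and lim: "(\<lambda>k. - y (m k)) \<longlonglongrightarrow> l"
  have "(\<lambda>k. - (- y (m k))) \<longlonglongrightarrow> - l" using lim by (rule tendsto_minus)
  then have "(\<lambda>k. y (Suc (m k))) \<longlonglongrightarrow> T (- l)" using m by (intro tendsto_Suc) simp_all
  then show "(\<lambda>k. - y (Suc (m k))) \<longlonglongrightarrow> - T (- l)" by (rule tendsto_minus)
qed

lemma eventually_gt_or_lt_if_not_fixed:
  assumes "T c \<noteq> c"
  shows "(\<forall>\<^sub>F n in sequentially. c < y n) \<or> (\<forall>\<^sub>F n in sequentially. y n < c)"
proof (cases "c < T c")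
  case True
  then show ?thesis
    by (intro eventually_gt_or_lt_if_upcrossing_persistent upcrossing_persistent)
next
  case False
  \<comment> \<open>the case \<open>T c < c\<close> is the case \<open>c < T c\<close> for the reflected sequence \<open>-y\<close>\<close>
  with assms have "- c < - T (- (- c))" by simp
  from eventually_gt_or_lt_if_upcrossing_persistent[OF
      monotone_limit_map.upcrossing_persistent[OF reflect this]]
  show ?thesis by (simp only: neg_less_iff_less) blast
qed

theorem tendsto_fixed_point:
  assumes "\<And>a b. a < b \<Longrightarrow> \<exists>c\<in>{a<..<b}. T c \<noteq> c"
  shows "\<exists>v. y \<longlonglongrightarrow> v \<and> T v = v"
proof -
  have "convergent y"
    using bounded_range by (rule convergent_if_eventually_gt_or_lt_dense)
      (use assms eventually_gt_or_lt_if_not_fixed in blast)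
  then obtain v where lim: "y \<longlonglongrightarrow> v" by (auto simp: convergent_def)
  have "(\<lambda>k. y (Suc k)) \<longlonglongrightarrow> T v" using tendsto_Suc[OF strict_mono_id] lim by simp
  moreover have "(\<lambda>k. y (Suc k)) \<longlonglongrightarrow> v" using lim by (rule LIMSEQ_Suc)
  ultimately have "T v = v" by (rule LIMSEQ_unique)
  with lim show ?thesis by blast
qed

end

locale asymp_periodic_ode =
  fixes \<tau> :: real and f P R :: "real \<Rightarrow> real \<Rightarrow> real"
  assumes period_pos: "\<tau> > 0"
    and f_cont: "continuous_on ({0..} \<times> UNIV) (\<lambda>(t, x). f t x)"
    and regular: "regular f"
    and decomp: "asymp_periodic_decomp \<tau> f P R"
begin

lemma P_cont: "continuous_on UNIV (\<lambda>(t, x). P t x)"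
  and R_cont: "continuous_on ({0..} \<times> UNIV) (\<lambda>(t, x). R t x)"
  and P_add_period: "P (t + \<tau>) = P t"
  and f_eq: "t \<ge> 0 \<Longrightarrow> f t x = P t x + R t x"
  and R_vanishing: "compact K \<Longrightarrow> e > 0 \<Longrightarrow> \<exists>T. \<forall>t\<ge>T. \<forall>x\<in>K. \<bar>R t x\<bar> < e"
  using decomp unfolding asymp_periodic_decomp_def by (simp_all add: fun_eq_iff)

lemma P_periodic: "periodic_fun_simple P \<tau>"
  by unfold_locales (rule P_add_period)

lemma P_add_int_periods: "P (t + of_int k * \<tau>) = P t"
proof -
  interpret periodic_fun_simple P \<tau> by (rule P_periodic)
  show ?thesis by (rule plus_of_int)
qed

lemma P_add_nat_periods: "P (t + real n * \<tau>) = P t"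
  using P_add_int_periods[of t "int n"] by simp

lemma P_rmod: "P (t rmod \<tau>) = P t"
proof -
  have "t rmod \<tau> = t + of_int (- \<lfloor>t / \<tau>\<rfloor>) * \<tau>"
    using period_pos by (simp add: rmod_def)
  then show ?thesis by (simp only: P_add_int_periods)
qed

lemma rmod_period_bounds: "0 \<le> t rmod \<tau>" "t rmod \<tau> < \<tau>"
  using period_pos by (simp_all add: rmod_nonneg rmod_less)

lemma shifted_P_in_hull:
  assumes "a \<ge> 0"
  shows "(\<lambda>t. P (t + a)) \<in> hull_fun f"
  unfolding hull_fun_def
proof (intro CollectI conjI allI impI)
  have "continuous_on ({0..} \<times> UNIV) (\<lambda>z. (\<lambda>(t,x). P t x) ((\<lambda>z. (fst z + a, snd z)) z))"
    by (rule continuous_on_compose2[OF P_cont]) (auto intro!: continuous_intros)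
  then show "continuous_on ({0..} \<times> UNIV) (\<lambda>(t,x). P (t + a) x)"
    by (simp add: split_beta)
next
  fix K :: "(real \<times> real) set" and e :: real
  assume K: "K \<subseteq> {0..} \<times> UNIV" "compact K" and e: "e > 0"
  have "compact (snd ` K)" by (rule compact_continuous_image[OF continuous_on_snd K(2)]) (rule continuous_on_id)
  then obtain T where T: "\<forall>t\<ge>T. \<forall>x\<in>snd ` K. \<bar>R t x\<bar> < e" using R_vanishing e by blast
  obtain n :: nat where n: "T/\<tau> \<le> real n" using real_arch_simple by blast
  then have nT: "T \<le> real n * \<tau>" using period_pos by (simp add: pos_divide_le_eq)
  show "\<exists>h\<ge>0. \<forall>(t,x)\<in>K. \<bar>f (t + h) x - P (t + a) x\<bar> < e"
  proof (intro exI[of _ "a + real n * \<tau>"] conjI ballI)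
    show "0 \<le> a + real n * \<tau>" using assms period_pos by simp
    fix z assume z: "z \<in> K"
    obtain t x where tx: "z = (t, x)" by force
    have t0: "t \<ge> 0" using K z tx by auto
    have "f (t + (a + real n * \<tau>)) x = P ((t + a) + real n * \<tau>) x + R (t + (a + real n * \<tau>)) x"
      using f_eq[of "t + (a + real n * \<tau>)" x] t0 assms period_pos by (simp add: algebra_simps)
    also have "P ((t + a) + real n * \<tau>) = P (t + a)" by (rule P_add_nat_periods)
    finally have eq: "f (t + (a + real n * \<tau>)) x - P (t + a) x = R (t + (a + real n * \<tau>)) x" by simp
    have xK: "x \<in> snd ` K" using z tx by force
    have "t + (a + real n * \<tau>) \<ge> T" using t0 assms nT by linarith
    then have "\<bar>R (t + (a + real n * \<tau>)) x\<bar> < e"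
      using T xK by blast
    then show "case z of (t, x) \<Rightarrow> \<bar>f (t + (a + real n * \<tau>)) x - P (t + a) x\<bar> < e"
      using eq tx by simp
  qed
qed

lemma P_in_hull: "P \<in> hull_fun f"
  using shifted_P_in_hull[of 0] by simp

lemma f_in_hull: "f \<in> hull_fun f"
  unfolding hull_fun_def using f_cont by (auto intro!: exI[of _ 0])

lemma fwd_sol_phi: "g \<in> hull_fun f \<Longrightarrow> fwd_sol g v (phi g v)"
  using regular unfolding regular_def phi_def by (metis someI)

lemma fwd_sol_unique:
  assumes "g \<in> hull_fun f" "fwd_sol g v z" "t \<ge> 0"
  shows "z t = phi g v t"
proof -
  obtain y where "fwd_sol g v y" "\<forall>z. fwd_sol g v z \<longrightarrow> (\<forall>t\<ge>0. z t = y t)"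
    using regular assms(1) unfolding regular_def by blast
  then show ?thesis using assms fwd_sol_phi by metis
qed

lemma phi_P_0 [simp]: "phi P u 0 = u"
  using fwd_sol_phi[OF P_in_hull] unfolding fwd_sol_def by blast

lemma phi_P_deriv: "t \<ge> 0 \<Longrightarrow> (phi P u has_real_derivative P t (phi P u t)) (at t within {0..})"
  using fwd_sol_phi[OF P_in_hull] unfolding fwd_sol_def by blast

lemma continuous_on_phi_P: "continuous_on {0..} (phi P u)"
  using phi_P_deriv by (auto simp: continuous_on_eq_continuous_within intro: DERIV_continuous)

lemma phi_P_shift:
  assumes "a \<ge> 0" "t \<ge> 0"
  shows "phi P u (t + a) = phi (\<lambda>s. P (s + a)) (phi P u a) t"
  using fwd_sol_unique[OF shifted_P_in_hull fwd_sol_shift[OF fwd_sol_phi[OF P_in_hull]]] assms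
  by simp

lemma phi_P_eq_after_meeting:
  assumes "phi P u a = phi P v a" "0 \<le> a" "a \<le> t"
  shows "phi P u t = phi P v t"
  using phi_P_shift[of a "t - a" u] phi_P_shift[of a "t - a" v] assms by simp

lemma phi_P_mono:
  assumes "u \<le> v" "t \<ge> 0"
  shows "phi P u t \<le> phi P v t"
proof (rule ccontr)
  assume gt: "\<not> ?thesis"
  define h where "h s = phi P u s - phi P v s" for s
  have h_cont: "continuous_on {0..t} h"
    unfolding h_def by (intro continuous_intros continuous_on_subset[OF continuous_on_phi_P]) auto
  define A where "A = {0..t} \<inter> h -` {..0}"
  have "closed A"
    unfolding A_def by (rule continuous_closed_preimage[OF h_cont]) auto
  moreover have "0 \<in> A" "bdd_above A"
    using assms by (auto simp: A_def h_def)
  ultimately have "Sup A \<in> A" by (intro closed_contains_Sup) auto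
  then have a: "0 \<le> Sup A" "Sup A \<le> t" "h (Sup A) \<le> 0" by (auto simp: A_def)
  have "h (Sup A) = 0"
  proof (rule ccontr)
    assume "h (Sup A) \<noteq> 0"
    moreover have "0 < h t" using gt by (simp add: h_def)
    moreover have "continuous_on {Sup A..t} h" by (rule continuous_on_subset[OF h_cont]) (use a in auto)
    ultimately obtain s where "Sup A \<le> s" "s \<le> t" "h s = 0"
      using IVT'[of h "Sup A" 0 t] a by auto
    moreover from this a have "s \<in> A" by (auto simp: A_def)
    then have "s \<le> Sup A" using \<open>bdd_above A\<close> by (rule cSup_upper)
    ultimately show False using \<open>h (Sup A) \<noteq> 0\<close> by (metis order_antisym)
  qed
  then have "phi P u t = phi P v t"
    using phi_P_eq_after_meeting[of u "Sup A" v t] a by (simp add: h_def)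
  with gt show False by simp
qed

text \<open>Regularity only gives uniqueness on the whole half-line, so a solution on [0, L] is first
  continued beyond L by a solution of the shifted equation.\<close>

lemma solution_on_interval_eq_phi_P:
  assumes "L \<ge> 0"
    and z: "\<And>t. t \<in> {0..L} \<Longrightarrow> (z has_real_derivative P t (z t)) (at t within {0..L})"
    and "s \<in> {0..L}"
  shows "z s = phi P (z 0) s"
proof -
  have "fwd_sol (\<lambda>t. P (t + L)) (z L) (phi (\<lambda>t. P (t + L)) (z L))"
    by (rule fwd_sol_phi[OF shifted_P_in_hull[OF assms(1)]])
  from fwd_sol_glue[OF assms(1) z this]
  have "fwd_sol P (z 0) (\<lambda>t. if t \<le> L then z t else phi (\<lambda>t. P (t + L)) (z L) (t - L))" .
  from fwd_sol_unique[OF P_in_hull this, of s] assms(3) show ?thesis by simp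
qed

definition poincare :: "real \<Rightarrow> real" where
  "poincare u = phi P u \<tau>"

lemma mono_poincare: "mono poincare"
  unfolding poincare_def using phi_P_mono period_pos by (simp add: mono_def)

lemma phi_P_add_period:
  assumes "t \<ge> 0"
  shows "phi P u (t + \<tau>) = phi P (poincare u) t"
  using phi_P_shift[of \<tau> t u] assms period_pos by (simp add: P_add_period poincare_def)

lemma phi_P_fixed_add_periods:
  assumes "poincare c = c" "t \<ge> 0"
  shows "phi P c (t + real n * \<tau>) = phi P c t"
proof (induction n)
  case (Suc n)
  have "phi P c (t + real (Suc n) * \<tau>) = phi P c ((t + real n * \<tau>) + \<tau>)"
    by (simp add: algebra_simps)
  also have "\<dots> = phi P c (t + real n * \<tau>)"
    using phi_P_add_period[of "t + real n * \<tau>" c] assms period_pos by simp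
  finally show ?case using Suc by simp
qed simp

definition periodic_extension :: "real \<Rightarrow> real \<Rightarrow> real" where
  "periodic_extension c t = phi P c (t rmod \<tau>)"

lemma periodic_extension_add_period: "periodic_extension c (t + \<tau>) = periodic_extension c t"
  unfolding periodic_extension_def by (metis add.right_neutral rmod_add rmod_rmod rmod_self)

lemma periodic_extension_add_periods: "periodic_extension c (t + of_int k * \<tau>) = periodic_extension c t"
proof -
  interpret periodic_fun_simple "periodic_extension c" \<tau>
    by unfold_locales (rule periodic_extension_add_period)
  show ?thesis by (rule plus_of_int)
qed

lemma periodic_extension_period_multiple [simp]: "periodic_extension c (of_int k * \<tau>) = c"
  by (simp add: periodic_extension_def)

lemma periodic_extension_eq_phi_P:
  assumes "poincare c = c" "t \<ge> 0"
  shows "periodic_extension c t = phi P c t"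
proof -
  have "t = t rmod \<tau> + real (nat \<lfloor>t / \<tau>\<rfloor>) * \<tau>"
    using assms(2) period_pos by (simp add: rmod_def)
  then have "phi P c t = phi P c (t rmod \<tau>)"
    using phi_P_fixed_add_periods[OF assms(1) rmod_period_bounds(1)] by metis
  then show ?thesis by (simp add: periodic_extension_def)
qed

lemma periodic_extension_deriv:
  assumes "poincare c = c"
  shows "(periodic_extension c has_real_derivative P t (periodic_extension c t)) (at t)"
proof -
  obtain n :: nat where "- t / \<tau> < real n" using reals_Archimedean2 by blast
  then have pos: "t + real n * \<tau> > 0" using period_pos by (simp add: field_simps)
  define t' where "t' = t + real n * \<tau>"
  have "(phi P c has_real_derivative P t' (phi P c t')) (at t' within {0<..})"
    by (rule has_field_derivative_subset[OF phi_P_deriv]) (use pos t'_def in auto)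
  then have "(phi P c has_real_derivative P t' (phi P c t')) (at t')"
    using at_within_open[of t' "{0<..}"] pos t'_def by simp
  then have shifted: "((\<lambda>s. phi P c (s + real n * \<tau>)) has_real_derivative P t' (phi P c t')) (at t)"
    using DERIV_shift[of "phi P c" "P t' (phi P c t')" t "real n * \<tau>"] t'_def by simp
  have eq: "phi P c (s + real n * \<tau>) = periodic_extension c s" if "s \<in> {- (real n * \<tau>)<..}" for s
    using periodic_extension_add_periods[of c s "int n"] periodic_extension_eq_phi_P[OF assms, of "s + real n * \<tau>"]
      that by simp
  have "t \<in> {- (real n * \<tau>)<..}" using pos by simp
  from has_field_derivative_transform_within_open[OF shifted open_greaterThan this eq]
  have "(periodic_extension c has_real_derivative P t' (phi P c t')) (at t)" .
  moreover have "P t' = P t" unfolding t'_def by (rule P_add_nat_periods)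
  moreover have "phi P c t' = periodic_extension c t"
    using periodic_extension_add_periods[of c t "int n"] periodic_extension_eq_phi_P[OF assms, of t'] pos t'_def
    by simp
  ultimately show ?thesis by simp
qed

lemma periodic_sol_periodic_extension:
  "poincare c = c \<Longrightarrow> periodic_sol \<tau> P (periodic_extension c)"
  unfolding periodic_sol_def using periodic_extension_add_period periodic_extension_deriv by blast

lemma tendsto_period_multiples: "filterlim (\<lambda>n. real n * \<tau>) at_top sequentially"
  by (rule filterlim_at_top_mult_tendsto_pos[OF tendsto_const period_pos filterlim_real_sequentially])

lemma eventually_ge_period_multiples:
  assumes "strict_mono m"
  shows "\<forall>\<^sub>F n in sequentially. T \<le> real (m n) * \<tau>"
proof -
  have "filterlim (\<lambda>n. real (m n) * \<tau>) at_top sequentially"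
    using filterlim_compose[OF tendsto_period_multiples filterlim_subseq[OF assms]] by simp
  then show ?thesis by (simp add: filterlim_at_top)
qed

lemma fixed_point_isolated_if_pos_stable:
  assumes "poincare c = c" "pos_asymp_stable P (periodic_extension c)"
  shows "\<exists>e>0. \<forall>c'. \<bar>c' - c\<bar> < e \<longrightarrow> poincare c' = c' \<longrightarrow> c' = c"
proof -
  obtain e where e: "e > 0"
    "\<forall>u. \<bar>u - c\<bar> < e \<longrightarrow> ((\<lambda>t. \<bar>phi P u t - periodic_extension c t\<bar>) \<longlongrightarrow> 0) at_top"
    using assms(2) unfolding pos_asymp_stable_def
    using periodic_extension_period_multiple[of c 0] by auto
  have "c' = c" if "\<bar>c' - c\<bar> < e" "poincare c' = c'" for c'
  proof -
    have "((\<lambda>t. \<bar>phi P c' t - periodic_extension c t\<bar>) \<longlongrightarrow> 0) at_top" using e that by blast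
    from filterlim_compose[OF this tendsto_period_multiples]
    have "((\<lambda>n. \<bar>phi P c' (real n * \<tau>) - periodic_extension c (real n * \<tau>)\<bar>) \<longlongrightarrow> 0) sequentially" .
    moreover have "phi P c' (real n * \<tau>) = c'" for n
      using phi_P_fixed_add_periods[OF that(2), of 0 n] by simp
    moreover have "periodic_extension c (real n * \<tau>) = c" for n
      using periodic_extension_period_multiple[of c "int n"] by simp
    ultimately have "(\<lambda>n. \<bar>c' - c\<bar>) \<longlonglongrightarrow> 0" by simp
    then show ?thesis by (simp add: LIMSEQ_const_iff)
  qed
  with e(1) show ?thesis by blast
qed

lemma fixed_point_isolated_if_neg_stable:
  assumes "poincare c = c" "neg_asymp_stable P (periodic_extension c)"
  shows "\<exists>e>0. \<forall>c'. \<bar>c' - c\<bar> < e \<longrightarrow> poincare c' = c' \<longrightarrow> c' = c"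
proof -
  obtain e where e: "e > 0" "\<forall>u. \<bar>u - c\<bar> < e \<longrightarrow>
      (\<forall>y. bwd_sol P u y \<longrightarrow> ((\<lambda>t. \<bar>y t - periodic_extension c t\<bar>) \<longlongrightarrow> 0) at_bot)"
    using assms(2) unfolding neg_asymp_stable_def
    using periodic_extension_period_multiple[of c 0] by auto
  have "c' = c" if "\<bar>c' - c\<bar> < e" "poincare c' = c'" for c'
  proof -
    have "bwd_sol P c' (periodic_extension c')"
      unfolding bwd_sol_def
      using periodic_extension_period_multiple[of c' 0] periodic_extension_deriv[OF that(2)]
      by (auto intro: has_field_derivative_at_within)
    then have "((\<lambda>t. \<bar>periodic_extension c' t - periodic_extension c t\<bar>) \<longlongrightarrow> 0) at_bot"
      using e that by blast
    moreover have "filterlim (\<lambda>n. - (real n * \<tau>)) at_bot sequentially"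
      using tendsto_period_multiples by (simp add: filterlim_uminus_at_bot)
    ultimately have "((\<lambda>n. \<bar>periodic_extension c' (- (real n * \<tau>)) - periodic_extension c (- (real n * \<tau>))\<bar>)
        \<longlongrightarrow> 0) sequentially"
      by (rule filterlim_compose)
    moreover have "periodic_extension d (- (real n * \<tau>)) = d" for d n
      using periodic_extension_period_multiple[of d "- int n"] by simp
    ultimately have "(\<lambda>n. \<bar>c' - c\<bar>) \<longlonglongrightarrow> 0" by simp
    then show ?thesis by (simp add: LIMSEQ_const_iff)
  qed
  with e(1) show ?thesis by blast
qed

lemma poincare_not_fixed_in_interval:
  assumes stable: "\<And>p. periodic_sol \<tau> P p \<Longrightarrow> pos_asymp_stable P p \<or> neg_asymp_stable P p"
    and "a < b"
  shows "\<exists>c\<in>{a<..<b}. poincare c \<noteq> c"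
proof (rule ccontr)
  assume "\<not> ?thesis"
  then have fixed: "poincare c = c" if "a < c" "c < b" for c using that by auto
  define c where "c = (a + b) / 2"
  have "poincare c = c" using \<open>a < b\<close> by (intro fixed) (simp_all add: c_def)
  with stable[OF periodic_sol_periodic_extension] obtain e where e: "e > 0"
    "\<forall>c'. \<bar>c' - c\<bar> < e \<longrightarrow> poincare c' = c' \<longrightarrow> c' = c"
    using fixed_point_isolated_if_pos_stable fixed_point_isolated_if_neg_stable by metis
  define d where "d = min (e / 2) ((b - a) / 4)"
  have d: "0 < d" "d < e" "d < (b - a) / 2"
    using \<open>a < b\<close> \<open>e > 0\<close> by (auto simp: d_def min_def)
  have "poincare (c + d) = c + d" using d by (intro fixed) (simp_all add: c_def field_simps)
  moreover have "\<bar>(c + d) - c\<bar> < e" "c + d \<noteq> c" using d by simp_all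
  ultimately show False using e(2) by blast
qed

lemma P_bounded_on_strip: "\<exists>C. \<forall>t x. \<bar>x\<bar> \<le> B \<longrightarrow> \<bar>P t x\<bar> \<le> C"
proof -
  define K where "K = {0..\<tau>} \<times> {-B..B}"
  have "compact ((\<lambda>(t, x). P t x) ` K)"
    unfolding K_def by (intro compact_continuous_image continuous_on_subset[OF P_cont] compact_Times compact_Icc) auto
  then obtain C where C: "\<forall>z\<in>(\<lambda>(t, x). P t x) ` K. norm z \<le> C"
    using compact_imp_bounded bounded_iff by metis
  have "\<bar>P t x\<bar> \<le> C" if "\<bar>x\<bar> \<le> B" for t x
  proof -
    have "(t rmod \<tau>, x) \<in> K" using that rmod_period_bounds[of t] by (auto simp: K_def abs_le_iff)
    then have "\<bar>P (t rmod \<tau>) x\<bar> \<le> C" using C by fastforce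
    then show ?thesis by (simp add: P_rmod)
  qed
  then show ?thesis by blast
qed

lemma R_bounded_on_strip: "\<exists>C. \<forall>t\<ge>0. \<forall>x. \<bar>x\<bar> \<le> B \<longrightarrow> \<bar>R t x\<bar> \<le> C"
proof -
  obtain T where T: "\<forall>t\<ge>T. \<forall>x\<in>{-B..B}. \<bar>R t x\<bar> < 1"
    using R_vanishing[of "{-B..B}" 1] by auto
  define K where "K = {0..max T 0} \<times> {-B..B}"
  have "compact ((\<lambda>(t, x). R t x) ` K)"
    unfolding K_def by (intro compact_continuous_image continuous_on_subset[OF R_cont] compact_Times compact_Icc) auto
  then obtain C where C: "\<forall>z\<in>(\<lambda>(t, x). R t x) ` K. norm z \<le> C"
    using compact_imp_bounded bounded_iff by metis
  have "\<bar>R t x\<bar> \<le> max C 1" if "t \<ge> 0" "\<bar>x\<bar> \<le> B" for t x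
  proof (cases "t \<le> max T 0")
    case True
    then have "(t, x) \<in> K" using that by (auto simp: K_def abs_le_iff)
    then show ?thesis using C by fastforce
  next
    case False
    then have "T \<le> t" by simp
    moreover have "x \<in> {-B..B}" using that(2) by (simp add: abs_le_iff)
    ultimately have "\<bar>R t x\<bar> < 1" using T by simp
    then show ?thesis by simp
  qed
  then show ?thesis by blast
qed

lemma f_bounded_on_strip: "\<exists>C. \<forall>t\<ge>0. \<forall>x. \<bar>x\<bar> \<le> B \<longrightarrow> \<bar>f t x\<bar> \<le> C"
proof -
  obtain C1 where C1: "\<forall>t x. \<bar>x\<bar> \<le> B \<longrightarrow> \<bar>P t x\<bar> \<le> C1" using P_bounded_on_strip by blast
  obtain C2 where C2: "\<forall>t\<ge>0. \<forall>x. \<bar>x\<bar> \<le> B \<longrightarrow> \<bar>R t x\<bar> \<le> C2" using R_bounded_on_strip by blast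
  have "\<bar>f t x\<bar> \<le> C1 + C2" if "t \<ge> 0" "\<bar>x\<bar> \<le> B" for t x
    using f_eq[OF that(1), of x] C1[rule_format, of x t] C2[rule_format, OF that] that(2)
      abs_triangle_ineq[of "P t x" "R t x"] by linarith
  then show ?thesis by blast
qed

lemma f_close_to_P:
  assumes "e > 0"
  obtains d T where "d > 0"
    "\<And>t x x'. T \<le> t \<Longrightarrow> \<bar>x\<bar> \<le> B \<Longrightarrow> \<bar>x'\<bar> \<le> B \<Longrightarrow> \<bar>x - x'\<bar> < d \<Longrightarrow> \<bar>f t x - P t x'\<bar> < e"
proof -
  define K where "K = {0..\<tau>} \<times> {-B..B}"
  have "uniformly_continuous_on K (\<lambda>(t, x). P t x)"
    unfolding K_def
    by (intro compact_uniformly_continuous continuous_on_subset[OF P_cont] compact_Times compact_Icc) auto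
  then obtain d where d: "d > 0"
    "\<forall>z\<in>K. \<forall>z'\<in>K. dist z' z < d \<longrightarrow> dist ((\<lambda>(t, x). P t x) z') ((\<lambda>(t, x). P t x) z) < e / 2"
    using assms unfolding uniformly_continuous_on_def by (meson half_gt_zero)
  obtain T where T: "\<forall>t\<ge>T. \<forall>x\<in>{-B..B}. \<bar>R t x\<bar> < e / 2"
    using R_vanishing[of "{-B..B}" "e / 2"] assms by auto
  show ?thesis
  proof (rule that[OF d(1)])
    fix t x x' assume t: "max T 0 \<le> t" and x: "\<bar>x\<bar> \<le> B" "\<bar>x'\<bar> \<le> B" "\<bar>x - x'\<bar> < d"
    have "(t rmod \<tau>, x) \<in> K" "(t rmod \<tau>, x') \<in> K"
      using x rmod_period_bounds[of t] by (auto simp: K_def abs_le_iff)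
    moreover have "dist (t rmod \<tau>, x) (t rmod \<tau>, x') < d"
      using x(3) by (simp add: dist_Pair_Pair dist_real_def)
    ultimately have "\<bar>P t x - P t x'\<bar> < e / 2"
      using d(2) by (fastforce simp: dist_real_def P_rmod)
    moreover have "\<bar>R t x\<bar> < e / 2" using T t x(1) by (auto simp: abs_le_iff)
    moreover have "f t x = P t x + R t x" using t by (intro f_eq) simp
    ultimately show "\<bar>f t x - P t x'\<bar> < e" by linarith
  qed
qed

end

locale bounded_solution = asymp_periodic_ode +
  fixes u0 B :: real
  assumes solution_bounded: "\<And>t. t \<ge> 0 \<Longrightarrow> \<bar>phi f u0 t\<bar> \<le> B"
begin

abbreviation sol :: "real \<Rightarrow> real" where
  "sol \<equiv> phi f u0"

lemma fwd_sol_sol: "fwd_sol f u0 sol"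
  by (rule fwd_sol_phi[OF f_in_hull])

lemma sol_lipschitz:
  obtains C where "C \<ge> 0" "\<And>s t. s \<ge> 0 \<Longrightarrow> t \<ge> 0 \<Longrightarrow> \<bar>sol s - sol t\<bar> \<le> C * \<bar>s - t\<bar>"
proof -
  obtain C where C: "\<forall>t\<ge>0. \<forall>x. \<bar>x\<bar> \<le> B \<longrightarrow> \<bar>f t x\<bar> \<le> C"
    using f_bounded_on_strip by blast
  have f_sol: "\<bar>f t (sol t)\<bar> \<le> C" if "t \<ge> 0" for t
    using C solution_bounded that by blast
  show ?thesis
  proof (rule that)
    show "C \<ge> 0" using f_sol[of 0] by linarith
    fix s t :: real assume "s \<ge> 0" "t \<ge> 0"
    have "norm (sol s - sol t) \<le> C * norm (s - t)"
    proof (rule field_differentiable_bound[OF convex_real_interval(1)])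
      show "(sol has_field_derivative f z (sol z)) (at z within {0..})" if "z \<in> {0..}" for z
        using fwd_sol_sol that by (simp add: fwd_sol_def)
      show "norm (f z (sol z)) \<le> C" if "z \<in> {0..}" for z
        using f_sol that by simp
    qed (use \<open>s \<ge> 0\<close> \<open>t \<ge> 0\<close> in auto)
    then show "\<bar>sol s - sol t\<bar> \<le> C * \<bar>s - t\<bar>" by simp
  qed
qed

lemma shifted_sol_bounded: "s \<in> {0..\<tau>} \<Longrightarrow> \<bar>sol (s + real k * \<tau>)\<bar> \<le> B"
  using solution_bounded period_pos by simp

lemma shifted_sol_deriv:
  assumes "s \<in> {0..\<tau>}"
  shows "((\<lambda>s. sol (s + real k * \<tau>)) has_real_derivative f (s + real k * \<tau>) (sol (s + real k * \<tau>)))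
    (at s within {0..\<tau>})"
proof -
  have "fwd_sol (\<lambda>t. f (t + real k * \<tau>)) (sol (real k * \<tau>)) (\<lambda>s. sol (s + real k * \<tau>))"
    using fwd_sol_shift[OF fwd_sol_sol] period_pos by simp
  then have "((\<lambda>s. sol (s + real k * \<tau>)) has_real_derivative f (s + real k * \<tau>) (sol (s + real k * \<tau>)))
      (at s within {0..})"
    using assms unfolding fwd_sol_def by simp
  then show ?thesis by (rule has_field_derivative_subset) auto
qed

lemma shifted_sol_subseq_uniform_limit:
  fixes m :: "nat \<Rightarrow> nat"
  obtains g and r :: "nat \<Rightarrow> nat"
  where "strict_mono r" "uniform_limit {0..\<tau>} (\<lambda>n s. sol (s + real (m (r n)) * \<tau>)) g sequentially"
proof -
  obtain C where C: "C \<ge> 0" "\<And>s t. s \<ge> 0 \<Longrightarrow> t \<ge> 0 \<Longrightarrow> \<bar>sol s - sol t\<bar> \<le> C * \<bar>s - t\<bar>"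
    using sol_lipschitz by blast
  define X where "X n s = sol (s + real (m n) * \<tau>)" for n s
  have bound: "norm (X n s) \<le> B" if "s \<in> {0..\<tau>}" for n s
    using shifted_sol_bounded[OF that] by (simp add: X_def)
  have equicont: "\<exists>d. 0 < d \<and> (\<forall>n s'. s' \<in> {0..\<tau>} \<and> norm (s - s') < d \<longrightarrow> norm (X n s - X n s') < e)"
    if "s \<in> {0..\<tau>}" "0 < e" for s e
  proof (intro exI conjI allI impI)
    show "0 < e / (C + 1)" using that C(1) by simp
    fix n s' assume s': "s' \<in> {0..\<tau>} \<and> norm (s - s') < e / (C + 1)"
    have "\<bar>X n s - X n s'\<bar> \<le> C * \<bar>s - s'\<bar>"
      using C(2)[of "s + real (m n) * \<tau>" "s' + real (m n) * \<tau>"] that(1) s' period_pos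
      by (simp add: X_def)
    also have "\<dots> \<le> C * (e / (C + 1))" using s' C(1) by (intro mult_left_mono) auto
    also have "\<dots> < e" using that(2) C(1) by (simp add: field_simps)
    finally show "norm (X n s - X n s') < e" by simp
  qed
  obtain g and r :: "nat \<Rightarrow> nat" where "continuous_on {0..\<tau>} g" "strict_mono r"
    and conv: "\<And>e. 0 < e \<Longrightarrow> \<exists>N. \<forall>n s. n \<ge> N \<and> s \<in> {0..\<tau>} \<longrightarrow> norm (X (r n) s - g s) < e"
    using Arzela_Ascoli[OF compact_Icc bound equicont] by metis
  have "uniform_limit {0..\<tau>} (\<lambda>n s. sol (s + real (m (r n)) * \<tau>)) g sequentially"
    unfolding uniform_limit_sequentially_iff
  proof (intro allI impI)
    fix e :: real assume "e > 0"
    then obtain N where "\<forall>n s. n \<ge> N \<and> s \<in> {0..\<tau>} \<longrightarrow> norm (X (r n) s - g s) < e"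
      using conv by blast
    then show "\<exists>N. \<forall>n\<ge>N. \<forall>s\<in>{0..\<tau>}. dist (sol (s + real (m (r n)) * \<tau>)) (g s) < e"
      by (auto simp: X_def dist_norm intro!: exI[of _ N])
  qed
  with \<open>strict_mono r\<close> show ?thesis by (rule that)
qed

lemma uniform_limit_shifted_sol_eq_phi_P:
  assumes m: "strict_mono m"
    and unif: "uniform_limit {0..\<tau>} (\<lambda>n s. sol (s + real (m n) * \<tau>)) g sequentially"
    and lim0: "(\<lambda>n. sol (real (m n) * \<tau>)) \<longlonglongrightarrow> v"
    and "s \<in> {0..\<tau>}"
  shows "g s = phi P v s"
proof -
  define X where "X = (\<lambda>n s. sol (s + real (m n) * \<tau>))"
  have X_lim: "(\<lambda>n. X n s) \<longlonglongrightarrow> g s" if "s \<in> {0..\<tau>}" for s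
    using tendsto_uniform_limitI[OF unif that] by (simp add: X_def)
  have g_bounded: "\<bar>g s\<bar> \<le> B" if "s \<in> {0..\<tau>}" for s
    by (rule LIMSEQ_le_const2[OF tendsto_rabs[OF X_lim[OF that]]])
      (use shifted_sol_bounded[OF that] in \<open>simp add: X_def\<close>)
  have deriv_conv: "\<forall>\<^sub>F n in sequentially. \<forall>s\<in>{0..\<tau>}. \<forall>h.
      norm (f (s + real (m n) * \<tau>) (X n s) * h - P s (g s) * h) \<le> e * norm h" if e: "e > 0" for e
  proof -
    obtain d T where d: "d > 0" and close: "\<And>t x x'. T \<le> t \<Longrightarrow> \<bar>x\<bar> \<le> B \<Longrightarrow> \<bar>x'\<bar> \<le> B \<Longrightarrow>
        \<bar>x - x'\<bar> < d \<Longrightarrow> \<bar>f t x - P t x'\<bar> < e"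
      using f_close_to_P[OF e] by metis
    have "\<forall>\<^sub>F n in sequentially. \<forall>s\<in>{0..\<tau>}. dist (X n s) (g s) < d"
      using uniform_limitD[OF unif d] by (simp add: X_def)
    moreover have "\<forall>\<^sub>F n in sequentially. T \<le> real (m n) * \<tau>"
      by (rule eventually_ge_period_multiples[OF m])
    ultimately show ?thesis
    proof eventually_elim
      case (elim n)
      show ?case
      proof (intro ballI allI)
        fix s h assume s: "s \<in> {0..\<tau>}"
        have "T \<le> s + real (m n) * \<tau>" using elim s by auto
        then have "\<bar>f (s + real (m n) * \<tau>) (X n s) - P (s + real (m n) * \<tau>) (g s)\<bar> < e"
          using close elim s shifted_sol_bounded[OF s] g_bounded[OF s] by (simp add: X_def dist_real_def)
        then have "\<bar>f (s + real (m n) * \<tau>) (X n s) - P s (g s)\<bar> \<le> e"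
          by (simp add: P_add_nat_periods)
        then show "norm (f (s + real (m n) * \<tau>) (X n s) * h - P s (g s) * h) \<le> e * norm h"
          by (simp add: left_diff_distrib[symmetric] abs_mult mult_right_mono)
      qed
    qed
  qed
  have X_deriv: "(X n has_derivative (*) (f (s + real (m n) * \<tau>) (X n s))) (at s within {0..\<tau>})"
    if "s \<in> {0..\<tau>}" for n s
    using shifted_sol_deriv[OF that, of "m n"] by (simp add: X_def has_field_derivative_def)
  have "0 \<in> {0..\<tau>}" using period_pos by simp
  moreover have X0: "(\<lambda>n. X n 0) \<longlonglongrightarrow> v" using lim0 by (simp add: X_def)
  ultimately obtain z where z: "\<forall>s\<in>{0..\<tau>}. (\<lambda>n. X n s) \<longlonglongrightarrow> z s \<and>
      (z has_derivative (*) (P s (g s))) (at s within {0..\<tau>})"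
    using has_derivative_sequence[OF convex_real_interval(5) X_deriv deriv_conv] by metis
  have zg: "z s = g s" if "s \<in> {0..\<tau>}" for s
    using LIMSEQ_unique X_lim z that by blast
  have "z 0 = v"
    using LIMSEQ_unique X0 z \<open>0 \<in> {0..\<tau>}\<close> by blast
  moreover have "(z has_real_derivative P s (z s)) (at s within {0..\<tau>})" if "s \<in> {0..\<tau>}" for s
    using z that zg[OF that] by (simp add: has_field_derivative_def)
  ultimately have "z s = phi P v s"
    using solution_on_interval_eq_phi_P[of \<tau> z s] period_pos assms(4) by simp
  with zg[OF assms(4)] show ?thesis by simp
qed

lemma uniform_limit_shifted_sol:
  assumes m: "strict_mono m" and lim: "(\<lambda>n. sol (real (m n) * \<tau>)) \<longlonglongrightarrow> v"
  shows "uniform_limit {0..\<tau>} (\<lambda>n s. sol (s + real (m n) * \<tau>)) (phi P v) sequentially"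
proof (rule uniform_limitI, rule ccontr)
  \<comment> \<open>every subsequence has a further subsequence converging uniformly to \<open>phi P v\<close>\<close>
  fix e :: real
  assume "\<not> (\<forall>\<^sub>F n in sequentially. \<forall>s\<in>{0..\<tau>}. dist (sol (s + real (m n) * \<tau>)) (phi P v s) < e)"
  then have freq: "\<exists>\<^sub>F n in sequentially. \<not> (\<forall>s\<in>{0..\<tau>}. dist (sol (s + real (m n) * \<tau>)) (phi P v s) < e)"
    by (simp only: not_eventually)
  obtain r :: "nat \<Rightarrow> nat" where r: "strict_mono r"
    "\<And>k. \<not> (\<forall>s\<in>{0..\<tau>}. dist (sol (s + real (m (r k)) * \<tau>)) (phi P v s) < e)"
    using frequently_sequentiallyE[OF freq] by metis
  obtain g and r' :: "nat \<Rightarrow> nat" where r': "strict_mono r'"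
    and unif: "uniform_limit {0..\<tau>} (\<lambda>n s. sol (s + real (m (r (r' n))) * \<tau>)) g sequentially"
    by (rule shifted_sol_subseq_uniform_limit[of "\<lambda>n. m (r n)"])
  have mrr': "strict_mono (\<lambda>n. m (r (r' n)))"
    using m r(1) r' by (simp add: strict_mono_def)
  have "(\<lambda>n. sol (real (m (r (r' n))) * \<tau>)) \<longlonglongrightarrow> v"
    using LIMSEQ_subseq_LIMSEQ[OF lim strict_mono_o[OF r(1) r']] by (simp add: o_def)
  note eq = uniform_limit_shifted_sol_eq_phi_P[OF mrr' unif this]
  have "uniform_limit {0..\<tau>} (\<lambda>n s. sol (s + real (m (r (r' n))) * \<tau>)) (phi P v) sequentially"
  proof (rule uniform_limitI)
    fix e' :: real assume "e' > 0"
    from uniform_limitD[OF unif this]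
    show "\<forall>\<^sub>F n in sequentially. \<forall>s\<in>{0..\<tau>}. dist (sol (s + real (m (r (r' n))) * \<tau>)) (phi P v s) < e'"
      by eventually_elim (simp add: eq)
  qed
  moreover assume "e > 0"
  ultimately obtain N where "\<forall>n\<ge>N. \<forall>s\<in>{0..\<tau>}. dist (sol (s + real (m (r (r' n))) * \<tau>)) (phi P v s) < e"
    by (auto simp: uniform_limit_sequentially_iff)
  then have "\<forall>s\<in>{0..\<tau>}. dist (sol (s + real (m (r (r' N))) * \<tau>)) (phi P v s) < e"
    by (rule spec[of _ N, THEN mp]) simp
  with r(2)[of "r' N"] show False by contradiction
qed

lemma tendsto_sol_next_period:
  assumes "strict_mono m" "(\<lambda>n. sol (real (m n) * \<tau>)) \<longlonglongrightarrow> v"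
  shows "(\<lambda>n. sol (real (Suc (m n)) * \<tau>)) \<longlonglongrightarrow> poincare v"
  using tendsto_uniform_limitI[OF uniform_limit_shifted_sol[OF assms], of \<tau>] period_pos
  by (simp add: poincare_def algebra_simps)

lemma monotone_limit_map_sol: "monotone_limit_map (\<lambda>n. sol (real n * \<tau>)) poincare"
proof
  show "bounded (range (\<lambda>n. sol (real n * \<tau>)))"
    unfolding bounded_iff using solution_bounded period_pos by (intro exI[of _ B]) auto
  show "mono poincare" by (rule mono_poincare)
  show "(\<lambda>k. sol (real (Suc (m k)) * \<tau>)) \<longlonglongrightarrow> poincare l"
    if "strict_mono m" "(\<lambda>k. sol (real (m k) * \<tau>)) \<longlonglongrightarrow> l" for m l
    using that by (rule tendsto_sol_next_period)
qed

end

theorem mainTheorem16: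
  fixes \<tau> :: real and f P R :: "real \<Rightarrow> real \<Rightarrow> real" and u0 :: real
  assumes "\<tau> > 0"
    and "continuous_on ({0..} \<times> UNIV) (\<lambda>(t,x). f t x)"
    and "regular f"
    and "asymp_periodic_decomp \<tau> f P R"
    and "\<And>p. periodic_sol \<tau> P p \<Longrightarrow> pos_asymp_stable P p \<or> neg_asymp_stable P p"
    and "bounded (phi f u0 ` {0..})"
  shows "asymp_periodic_fun \<tau> (phi f u0)"
proof -
  obtain B where "\<And>t. t \<ge> 0 \<Longrightarrow> \<bar>phi f u0 t\<bar> \<le> B"
    using assms(6) unfolding bounded_iff by auto
  then interpret bounded_solution \<tau> f P R u0 B
    using assms(1-4) by unfold_locales
  obtain v where lim: "(\<lambda>n. sol (real n * \<tau>)) \<longlonglongrightarrow> v" and fixed: "poincare v = v"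
    using monotone_limit_map.tendsto_fixed_point[OF monotone_limit_map_sol
        poincare_not_fixed_in_interval[OF assms(5)]] by blast
  have "uniform_limit {0..\<tau>} (\<lambda>n s. sol (s + real n * \<tau>)) (phi P v) sequentially"
    using uniform_limit_shifted_sol[OF strict_mono_id] lim by simp
  then have "uniform_limit {0..\<tau>} (\<lambda>n s. sol (s + real n * \<tau>)) (periodic_extension v) sequentially"
    using periodic_extension_eq_phi_P[OF fixed] uniform_limit_cong' by (metis atLeastAtMost_iff)
  moreover have "continuous_on UNIV (periodic_extension v)"
    using periodic_extension_deriv[OF fixed] by (meson DERIV_isCont continuous_at_imp_continuous_on)
  ultimately show ?thesis
    using asymp_periodic_funI[OF assms(1)] periodic_extension_add_period by blast
qed

end
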